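(* Let $p_1,p_2\in\mathcal{P}_{KZ}$ be transcendental periods with $\deg(p_1)\neq\deg(p_2)$. Then $p_1+p_2$ is a transcendental number.
   Context: $\mathbb{R}_{\mathrm{alg}}=\mathbb{R}\cap\overline{\mathbb{Q}}$. Semialgebraic subsets of $\mathbb{R}^n$ are finite unions of finite intersections of sets $\{f=0\}$, $\{g>0\}$ with $f,g\in\mathbb{R}_{\mathrm{alg}}[T_1,\dots,T_n]$; $\mathcal{SA}^n$ denotes those with nonempty interior. A period is a real number $\int_X (P/Q)(x)\,dx$ (absolutely convergent) with $X\in\mathcal{SA}^n$, $P,Q\in\mathbb{R}_{\mathrm{alg}}[T_1,\dots,T_n]$, $Q$ not identically zero on $X$; $\mathcal{P}_{KZ}$ is the set of periods. For a nonzero period $p$ there exists a positive integer $k$ and a compact $K\in\mathcal{SA}^k$ with $|p|=\mathrm{vol}_k(K)$; $\deg(p)$ is the smallest such $k$, and $\deg(0)=0$. *)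

theory Defs
  imports "HOL-Analysis.Analysis" "HOL-Computational_Algebra.Polynomial"
begin

text \<open>Points of R^n are represented as extensional functions nat => real
  supported on the coordinates {..<n}; R^n is the space of the product measure
  of n copies of Lebesgue--Borel measure.\<close>

definition Rn :: "nat \<Rightarrow> (nat \<Rightarrow> real) set" where
  "Rn n = {..<n} \<rightarrow>\<^sub>E (UNIV :: real set)"

definition lebn :: "nat \<Rightarrow> (nat \<Rightarrow> real) measure" where
  "lebn n = PiM {..<n} (\<lambda>_. lborel)"

definition Ralg :: "real set" where
  "Ralg = {x. algebraic x}"

text \<open>Polynomial functions in the variables T_1..T_n (coordinates 0..n-1) with
  coefficients in R_alg, given as a finite list of (exponent vector, coefficient).\<close>
definition alg_poly :: "nat \<Rightarrow> ((nat \<Rightarrow> real) \<Rightarrow> real) \<Rightarrow> bool" where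
  "alg_poly n f \<longleftrightarrow> (\<exists>ms :: ((nat \<Rightarrow> nat) \<times> real) list.
      (\<forall>(\<alpha>, c) \<in> set ms. c \<in> Ralg) \<and>
      (\<forall>x. f x = (\<Sum>(\<alpha>, c) \<leftarrow> ms. c * (\<Prod>i<n. x i ^ \<alpha> i))))"

inductive semialg :: "nat \<Rightarrow> (nat \<Rightarrow> real) set \<Rightarrow> bool" for n where
  eq:  "alg_poly n f \<Longrightarrow> semialg n {x \<in> Rn n. f x = 0}"
| pos: "alg_poly n g \<Longrightarrow> semialg n {x \<in> Rn n. g x > 0}"
| un:  "semialg n A \<Longrightarrow> semialg n B \<Longrightarrow> semialg n (A \<union> B)"
| int: "semialg n A \<Longrightarrow> semialg n B \<Longrightarrow> semialg n (A \<inter> B)"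

definition nonempty_interior :: "nat \<Rightarrow> (nat \<Rightarrow> real) set \<Rightarrow> bool" where
  "nonempty_interior n S \<longleftrightarrow>
     (\<exists>x \<in> S. \<exists>e > 0. \<forall>y \<in> Rn n. (\<forall>i<n. \<bar>y i - x i\<bar> < e) \<longrightarrow> y \<in> S)"

definition SA :: "nat \<Rightarrow> (nat \<Rightarrow> real) set set" where
  "SA n = {S. semialg n S \<and> nonempty_interior n S}"

definition is_period :: "real \<Rightarrow> bool" where
  "is_period p \<longleftrightarrow> (\<exists>n X P Q. n \<ge> 1 \<and> X \<in> SA n \<and> alg_poly n P \<and> alg_poly n Q \<and>
      (\<exists>x \<in> X. Q x \<noteq> 0) \<and>
      set_integrable (lebn n) X (\<lambda>x. P x / Q x) \<and>
      p = (LINT x : X | lebn n. P x / Q x))"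

definition PKZ :: "real set" where
  "PKZ = {p. is_period p}"

definition period_deg :: "real \<Rightarrow> nat" where
  "period_deg p = (if p = 0 then 0 else
     (LEAST k. k > 0 \<and> (\<exists>K. K \<in> SA k \<and> compact K \<and> \<bar>p\<bar> = measure (lebn k) K)))"

end

theory Submission
  imports Defs
begin

text \<open>
  Write \<open>V\<^sub>k\<close> for the set of volumes of compact sets in \<open>SA\<^sup>k\<close>, so that \<open>deg p\<close> is the
  least \<open>k > 0\<close> with \<open>\<bar>p\<bar> \<in> V\<^sub>k\<close>. Let \<open>k > 0\<close> and \<open>c > 0\<close> algebraic. Then \<open>V\<^sub>k\<close> is closed
  under \<open>v \<mapsto> v + c\<close> (attach a disjoint box of volume \<open>c\<close>) and under \<open>v \<mapsto> v - c\<close> for \<open>c < v\<close>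
  (cut open boxes with algebraic corners and total volume \<open>c\<close> out of the set), and with \<open>v\<close>
  it contains \<open>N - v\<close> for some integer \<open>N\<close> (a union of boxes around the set, minus the set).
  The last two constructions keep the set compact by removing only relatively open pieces:
  every semialgebraic set contains a relatively open semialgebraic subset with null
  complement, because the zero set of a nonzero polynomial is null. Hence \<open>\<bar>x\<bar> \<in> V\<^sub>k\<close>
  implies \<open>\<bar>a - x\<bar> \<in> V\<^sub>k\<close> for algebraic \<open>a\<close> and \<open>x \<notin> {0, a}\<close>, so \<open>deg (a - x) = deg x\<close>.
  If \<open>p\<^sub>1 + p\<^sub>2 = a\<close> were algebraic, then \<open>deg p\<^sub>2 = deg (a - p\<^sub>1) = deg p\<^sub>1\<close>.
\<close>

text \<open>Like \<^const>\<open>alg_poly\<close>, but with arbitrary real coefficients: slicing a polynomial with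
  algebraic coefficients along a coordinate produces such coefficients.\<close>

definition poly_fun :: "nat \<Rightarrow> ((nat \<Rightarrow> real) \<Rightarrow> real) \<Rightarrow> bool" where
  "poly_fun n f \<longleftrightarrow> (\<exists>ms :: ((nat \<Rightarrow> nat) \<times> real) list.
      \<forall>x. f x = (\<Sum>(\<alpha>, c) \<leftarrow> ms. c * (\<Prod>i<n. x i ^ \<alpha> i)))"

lemma alg_poly_imp_poly_fun: "alg_poly n f \<Longrightarrow> poly_fun n f"
  unfolding alg_poly_def poly_fun_def by blast

lemma poly_funE:
  assumes "poly_fun n f"
  obtains ms where "f = (\<lambda>x. \<Sum>(\<alpha>, c) \<leftarrow> ms. c * (\<Prod>i<n. x i ^ \<alpha> i))"
  using assms unfolding poly_fun_def by fast

lemma space_lebn: "space (lebn n) = Rn n"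
  unfolding lebn_def Rn_def by (simp add: space_PiM)

lemma poly_fun_measurable:
  assumes "poly_fun n f"
  shows "f \<in> borel_measurable (lebn n)"
proof -
  obtain ms where f: "f = (\<lambda>x. \<Sum>(\<alpha>, c) \<leftarrow> ms. c * (\<Prod>i<n. x i ^ \<alpha> i))"
    using assms by (rule poly_funE)
  have "(\<lambda>x. \<Sum>(\<alpha>, c) \<leftarrow> ms. c * (\<Prod>i<n. x i ^ \<alpha> i)) \<in> borel_measurable (lebn n)"
  proof (induction ms)
    case (Cons m ms)
    have "(\<lambda>x. snd m * (\<Prod>i<n. x i ^ fst m i)) \<in> borel_measurable (lebn n)"
      unfolding lebn_def by measurable
    with Cons show ?case by (simp add: case_prod_beta)
  qed simp
  then show ?thesis by (simp add: f)
qed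

lemma continuous_on_poly_fun:
  assumes "poly_fun n f"
  shows "continuous_on UNIV f"
proof -
  obtain ms where f: "f = (\<lambda>x. \<Sum>(\<alpha>, c) \<leftarrow> ms. c * (\<Prod>i<n. x i ^ \<alpha> i))"
    using assms by (rule poly_funE)
  have "continuous_on UNIV (\<lambda>x. \<Sum>(\<alpha>, c) \<leftarrow> ms. c * (\<Prod>i<n. x i ^ \<alpha> i))"
  proof (induction ms)
    case (Cons m ms)
    have "continuous_on UNIV (\<lambda>x. snd m * (\<Prod>i<n. x i ^ fst m i))"
      by (intro continuous_intros continuous_on_product_coordinates)
    with Cons show ?case by (simp add: case_prod_beta continuous_on_add)
  qed simp
  then show ?thesis by (simp add: f)
qed

lemma Rn_0: "Rn 0 = {\<lambda>_. undefined}"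
  unfolding Rn_def by auto

lemma fun_upd_in_Rn_Suc: "x \<in> Rn k \<Longrightarrow> x(k := t) \<in> Rn (Suc k)"
  unfolding Rn_def by (auto simp: PiE_def extensional_def)

lemma Rn_SucE:
  assumes "x \<in> Rn (Suc k)"
  obtains y where "y \<in> Rn k" "x = y(k := x k)"
proof
  show "x(k := undefined) \<in> Rn k" "x = (x(k := undefined))(k := x k)"
    using assms unfolding Rn_def by (auto simp: PiE_def extensional_def)
qed

lemma poly_fun_last_variable:
  assumes "poly_fun (Suc k) f"
  obtains P where "\<And>x t. f (x(k := t)) = poly (P x) t" "\<And>j. poly_fun k (\<lambda>x. coeff (P x) j)"
proof -
  obtain ms where f: "f = (\<lambda>x. \<Sum>(\<alpha>, c) \<leftarrow> ms. c * (\<Prod>i<Suc k. x i ^ \<alpha> i))"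
    using assms by (rule poly_funE)
  define P where "P x = (\<Sum>(\<alpha>, c) \<leftarrow> ms. monom (c * (\<Prod>i<k. x i ^ \<alpha> i)) (\<alpha> k))" for x
  have prod_upd: "(\<Prod>i<Suc k. (x(k := t)) i ^ \<alpha> i) = (\<Prod>i<k. x i ^ \<alpha> i) * t ^ \<alpha> k"
    for x :: "nat \<Rightarrow> real" and t and \<alpha> :: "nat \<Rightarrow> nat"
    by (simp add: lessThan_Suc mult.commute)
  have "f (x(k := t)) = poly (P x) t" for x t
    unfolding f P_def by (induction ms) (auto simp: poly_monom prod_upd mult.assoc)
  moreover have "poly_fun k (\<lambda>x. coeff (P x) j)" for j
  proof -
    have "coeff (P x) j =
        (\<Sum>(\<alpha>, c) \<leftarrow> map (\<lambda>(\<alpha>, c). (\<alpha>, if \<alpha> k = j then c else 0)) ms. c * (\<Prod>i<k. x i ^ \<alpha> i))" for x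
      unfolding P_def by (induction ms) auto
    then show ?thesis unfolding poly_fun_def by blast
  qed
  ultimately show ?thesis by (rule that)
qed

lemma null_sets_lebn_Suc:
  assumes Z: "Z \<in> sets (lebn (Suc k))"
    and slices: "AE x in lebn k. (\<integral>\<^sup>+ t. indicator Z (x(k := t)) \<partial>lborel) = 0"
  shows "Z \<in> null_sets (lebn (Suc k))"
proof -
  interpret product_sigma_finite "\<lambda>_. lborel" by standard
  have "emeasure (lebn (Suc k)) Z = (\<integral>\<^sup>+ x. indicator Z x \<partial>lebn (Suc k))"
    using Z by simp
  also have "\<dots> = (\<integral>\<^sup>+ x. (\<integral>\<^sup>+ t. indicator Z (x(k := t)) \<partial>lborel) \<partial>lebn k)"
    using Z unfolding lebn_def lessThan_Suc by (intro product_nn_integral_insert) auto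
  also have "\<dots> = (\<integral>\<^sup>+ x. 0 \<partial>lebn k)"
    using slices by (rule nn_integral_cong_AE)
  finally show ?thesis using Z by (simp add: null_sets_def)
qed

lemma poly_fun_zero_set_null:
  "poly_fun n f \<Longrightarrow> (\<exists>x\<in>Rn n. f x \<noteq> 0) \<Longrightarrow> {x \<in> Rn n. f x = 0} \<in> null_sets (lebn n)"
proof (induction n arbitrary: f)
  case 0
  then have empty: "{x \<in> Rn 0. f x = 0} = {}" by (auto simp: Rn_0)
  show ?case unfolding empty by simp
next
  case (Suc k)
  obtain P where P: "\<And>x t. f (x(k := t)) = poly (P x) t" "\<And>j. poly_fun k (\<lambda>x. coeff (P x) j)"
    using poly_fun_last_variable[OF Suc.prems(1)] by blast
  obtain x0 where x0: "x0 \<in> Rn (Suc k)" "f x0 \<noteq> 0"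
    using Suc.prems(2) by blast
  obtain y0 where y0: "y0 \<in> Rn k" "x0 = y0(k := x0 k)"
    using x0(1) by (rule Rn_SucE)
  have "P y0 \<noteq> 0"
    using x0(2) y0(2) P(1) by (metis poly_0)
  then obtain j where j: "coeff (P y0) j \<noteq> 0"
    by (metis leading_coeff_0_iff)
  have N: "{x \<in> Rn k. coeff (P x) j = 0} \<in> null_sets (lebn k)"
    using Suc.IH[OF P(2)] y0(1) j by blast
  let ?Z = "{x \<in> Rn (Suc k). f x = 0}"
  have Z: "?Z \<in> sets (lebn (Suc k))"
    using poly_fun_measurable[OF Suc.prems(1)] unfolding space_lebn[symmetric] by measurable
  have slice: "(\<integral>\<^sup>+ t. indicator ?Z (x(k := t)) \<partial>lborel) = 0"
    if x: "x \<in> Rn k" "coeff (P x) j \<noteq> 0" for x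
  proof -
    have "P x \<noteq> 0" using x(2) by auto
    then have fin: "finite {t. poly (P x) t = 0}" by (rule poly_roots_finite)
    have "(\<integral>\<^sup>+ t. indicator ?Z (x(k := t)) \<partial>lborel) = (\<integral>\<^sup>+ t. indicator {t. poly (P x) t = 0} t \<partial>lborel)"
      using fun_upd_in_Rn_Suc[OF x(1)] by (intro nn_integral_cong) (auto simp: indicator_def P(1))
    also have "\<dots> = 0"
      using finite_imp_null_set_lborel[OF fin] by (simp add: null_sets_def)
    finally show ?thesis .
  qed
  have "AE x in lebn k. (\<integral>\<^sup>+ t. indicator ?Z (x(k := t)) \<partial>lborel) = 0"
    using AE_not_in[OF N] AE_space by eventually_elim (auto simp: space_lebn slice)
  then show ?case by (rule null_sets_lebn_Suc[OF Z])
qed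

lemma open_fun_coordinate_neighbourhood:
  fixes V :: "('a \<Rightarrow> real) set"
  assumes "open V" "x \<in> V"
  obtains J e where "finite J" "e > 0" "\<And>y. \<forall>i\<in>J. \<bar>y i - x i\<bar> < e \<Longrightarrow> y \<in> V"
proof -
  obtain X where X: "x \<in> Pi\<^sub>E UNIV X" "\<And>i. open (X i)" "finite {i. X i \<noteq> UNIV}" "Pi\<^sub>E UNIV X \<subseteq> V"
    using product_topology_open_contains_basis[of "\<lambda>_. euclidean" UNIV V x] assms
    by (auto simp: open_fun_def)
  define J where "J = {i. X i \<noteq> UNIV}"
  have "\<exists>d>0. ball (x i) d \<subseteq> X i" for i
    using X(1) open_contains_ball[of "X i"] X(2) by auto
  then obtain d where d: "\<And>i. d i > 0" "\<And>i. ball (x i) (d i) \<subseteq> X i"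
    by metis
  define e where "e = Min (insert 1 (d ` J))"
  have "finite J" using X(3) by (simp add: J_def)
  then have "e > 0" "\<And>i. i \<in> J \<Longrightarrow> e \<le> d i"
    using d(1) by (auto simp: e_def)
  moreover have "y \<in> V" if y: "\<forall>i\<in>J. \<bar>y i - x i\<bar> < e" for y
  proof -
    have "y i \<in> X i" for i
    proof (cases "i \<in> J")
      case True
      have "dist (x i) (y i) < d i"
        using y True \<open>\<And>i. i \<in> J \<Longrightarrow> e \<le> d i\<close> by (fastforce simp: dist_real_def)
      then show ?thesis using d(2)[of i] by (auto simp: subset_iff)
    qed (simp add: J_def)
    then show ?thesis using X(4) by auto
  qed
  ultimately show ?thesis using \<open>finite J\<close> that by blast
qed

lemma openin_Rn_box_neighbourhood:
  assumes "openin (top_of_set (Rn n)) U" "x \<in> U"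
  obtains e where "e > 0" "\<And>y. y \<in> Rn n \<Longrightarrow> \<forall>i<n. \<bar>y i - x i\<bar> < e \<Longrightarrow> y \<in> U"
proof -
  obtain V where V: "open V" "U = Rn n \<inter> V"
    using assms(1) by (auto simp: openin_open)
  then obtain J e where J: "e > 0" "\<And>y. \<forall>i\<in>J. \<bar>y i - x i\<bar> < e \<Longrightarrow> y \<in> V"
    using assms(2) open_fun_coordinate_neighbourhood by blast
  have "y \<in> U" if y: "y \<in> Rn n" "\<forall>i<n. \<bar>y i - x i\<bar> < e" for y
  proof -
    \<comment> \<open>outside the first \<open>n\<close> coordinates both points are \<open>undefined\<close>\<close>
    have "y i = x i" if "\<not> i < n" for i
      using that y(1) assms(2) V(2) by (auto simp: Rn_def PiE_def extensional_def)
    then have "\<forall>i\<in>J. \<bar>y i - x i\<bar> < e"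
      using y(2) J(1) by (metis abs_zero diff_self)
    then show ?thesis using J(2) y(1) V(2) by blast
  qed
  then show ?thesis using J(1) that by blast
qed

lemma nonempty_interiorI:
  assumes "openin (top_of_set (Rn n)) U" "x \<in> U" "U \<subseteq> S"
  shows "nonempty_interior n S"
proof -
  obtain e where "e > 0" "\<And>y. y \<in> Rn n \<Longrightarrow> \<forall>i<n. \<bar>y i - x i\<bar> < e \<Longrightarrow> y \<in> U"
    using openin_Rn_box_neighbourhood[OF assms(1,2)] by blast
  then show ?thesis
    using assms(2,3) unfolding nonempty_interior_def by blast
qed

lemma nonempty_interior_mono: "S \<subseteq> T \<Longrightarrow> nonempty_interior n S \<Longrightarrow> nonempty_interior n T"
  unfolding nonempty_interior_def by blast

lemma compact_Diff_openin_Rn: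
  assumes "compact K" "K \<subseteq> Rn n" "openin (top_of_set (Rn n)) U"
  shows "compact (K - U)"
proof -
  obtain V where "open V" "U = Rn n \<inter> V"
    using assms(3) by (auto simp: openin_open)
  then have "K - U = K \<inter> - V" using assms(2) by auto
  then show ?thesis using assms(1) \<open>open V\<close> by (simp add: compact_Int_closed open_closed)
qed

lemma openin_poly_fun_pos:
  assumes "poly_fun n g"
  shows "openin (top_of_set (Rn n)) {x \<in> Rn n. g x > 0}"
proof -
  have "open {x. 0 < g x}"
    using continuous_on_poly_fun[OF assms] by (intro open_Collect_less) auto
  then show ?thesis by (auto simp: openin_open)
qed

lemma coeff_pcompose_in_Rats:
  fixes p q :: "'a :: field_char_0 poly"
  assumes "\<And>i. coeff p i \<in> \<rat>" "\<And>i. coeff q i \<in> \<rat>"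
  shows "coeff (pcompose p q) i \<in> \<rat>"
  using assms(1)
proof (induction p arbitrary: i)
  case (pCons a p)
  have "coeff (pcompose p q) j \<in> \<rat>" for j
    using pCons.IH pCons.prems[of "Suc _"] by simp
  then have "coeff (q * pcompose p q) i \<in> \<rat>"
    unfolding coeff_mult using assms(2) by (intro Rats_sum Rats_mult)
  moreover have "coeff [:a:] i \<in> \<rat>"
    using pCons.prems[of 0] by (cases i) auto
  ultimately show ?case by (simp add: pcompose_pCons)
qed simp

lemma algebraic_rat_affine:
  fixes x :: real
  assumes "algebraic x" "q \<in> \<rat>" "r \<in> \<rat>"
  shows "algebraic (q * x + r)"
proof (cases "q = 0")
  case True
  then show ?thesis using assms(3) by (simp add: rat_imp_algebraic)
next
  case False
  obtain p :: "real poly" where p: "\<And>i. coeff p i \<in> \<rat>" "p \<noteq> 0" "poly p x = 0"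
    using assms(1) unfolding algebraic_altdef by blast
  \<comment> \<open>\<open>q * x + r\<close> is a root of \<open>p((y - r) / q)\<close>\<close>
  define p' where "p' = pcompose p [:- r / q, 1 / q:]"
  have "coeff [:- r / q, 1 / q:] i \<in> \<rat>" for i
    using assms(2,3) by (cases i; cases "i - 1") (auto simp: coeff_pCons)
  then have "coeff p' i \<in> \<rat>" for i
    unfolding p'_def by (intro coeff_pcompose_in_Rats p)
  moreover have "p' \<noteq> 0"
    unfolding p'_def using p(2) False by (subst pcompose_eq_0_iff) auto
  moreover have "poly p' (q * x + r) = 0"
    unfolding p'_def poly_pcompose using False p(3) by (simp add: field_simps)
  ultimately show ?thesis unfolding algebraic_altdef by blast
qed

lemma alg_poly_const: "algebraic c \<Longrightarrow> alg_poly n (\<lambda>_. c)"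
  unfolding alg_poly_def Ralg_def by (intro exI[of _ "[(\<lambda>_. 0, c)]"]) auto

lemma alg_poly_uminus: "alg_poly n f \<Longrightarrow> alg_poly n (\<lambda>x. - f x)"
proof -
  assume "alg_poly n f"
  then obtain ms where ms: "\<forall>(\<alpha>, c) \<in> set ms. c \<in> Ralg"
      "\<forall>x. f x = (\<Sum>(\<alpha>, c) \<leftarrow> ms. c * (\<Prod>i<n. x i ^ \<alpha> i))"
    unfolding alg_poly_def by blast
  let ?ms' = "map (\<lambda>(\<alpha>, c). (\<alpha>, - c)) ms"
  have "- (\<Sum>(\<alpha>, c) \<leftarrow> ms. c * (\<Prod>i<n. x i ^ \<alpha> i)) = (\<Sum>(\<alpha>, c) \<leftarrow> ?ms'. c * (\<Prod>i<n. x i ^ \<alpha> i))"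
    for x by (induction ms) auto
  then have "- f x = (\<Sum>(\<alpha>, c) \<leftarrow> ?ms'. c * (\<Prod>i<n. x i ^ \<alpha> i))" for x
    using ms(2) by simp
  moreover have "\<forall>(\<alpha>, c) \<in> set ?ms'. c \<in> Ralg"
    using ms(1) by (auto simp: Ralg_def)
  ultimately show ?thesis unfolding alg_poly_def by blast
qed

lemma alg_poly_coordinate_affine:
  assumes "i < n" "algebraic s" "algebraic a"
  shows "alg_poly n (\<lambda>x. s * x i + a)"
proof -
  let ?e = "\<lambda>j. if j = i then 1 else 0 :: nat"
  have "(\<Prod>j<n. x j ^ ?e j) = (\<Prod>j\<in>{i}. x j ^ ?e j)" for x :: "nat \<Rightarrow> real"
    using assms(1) by (intro prod.mono_neutral_right) auto
  then show ?thesis unfolding alg_poly_def Ralg_def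
    by (intro exI[of _ "[(?e, s), (\<lambda>_. 0, a)]"]) (simp add: assms)
qed

lemma semialg_subset_Rn: "semialg n S \<Longrightarrow> S \<subseteq> Rn n"
  by (induction rule: semialg.induct) auto

lemma semialg_sets_lebn: "semialg n S \<Longrightarrow> S \<in> sets (lebn n)"
proof (induction rule: semialg.induct)
  case (eq f)
  then show ?case
    using poly_fun_measurable[OF alg_poly_imp_poly_fun] unfolding space_lebn[symmetric] by measurable
next
  case (pos g)
  then show ?case
    using poly_fun_measurable[OF alg_poly_imp_poly_fun] unfolding space_lebn[symmetric] by measurable
qed auto

lemma semialg_Rn: "semialg n (Rn n)"
  using semialg.eq[OF alg_poly_const[of 0]] by simp

lemma semialg_empty: "semialg n {}"
  using semialg.pos[OF alg_poly_const[of "-1"]] by simp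

lemma semialg_Rn_Diff: "semialg n S \<Longrightarrow> semialg n (Rn n - S)"
proof (induction rule: semialg.induct)
  case (eq f)
  have "Rn n - {x \<in> Rn n. f x = 0} = {x \<in> Rn n. f x > 0} \<union> {x \<in> Rn n. - f x > 0}" by auto
  then show ?case using eq by (simp only:) (intro semialg.un semialg.pos alg_poly_uminus)
next
  case (pos g)
  have "Rn n - {x \<in> Rn n. g x > 0} = {x \<in> Rn n. g x = 0} \<union> {x \<in> Rn n. - g x > 0}" by auto
  then show ?case using pos by (simp only:) (intro semialg.un semialg.eq semialg.pos alg_poly_uminus)
next
  case (un A B)
  have "Rn n - (A \<union> B) = (Rn n - A) \<inter> (Rn n - B)" by auto
  then show ?case using un by (simp add: semialg.int)
next
  case (int A B)
  have "Rn n - (A \<inter> B) = (Rn n - A) \<union> (Rn n - B)" by auto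
  then show ?case using int by (simp add: semialg.un)
qed

lemma semialg_Diff:
  assumes "semialg n A" "semialg n B"
  shows "semialg n (A - B)"
proof -
  have "A - B = A \<inter> (Rn n - B)" using semialg_subset_Rn[OF assms(1)] by auto
  then show ?thesis using assms semialg.int semialg_Rn_Diff by metis
qed

lemma semialg_UN:
  assumes "finite I" "\<And>t. t \<in> I \<Longrightarrow> semialg n (A t)"
  shows "semialg n (\<Union>t\<in>I. A t)"
  using assms by (induction I rule: finite_induct) (auto intro: semialg_empty semialg.un)

lemma semialg_all_coordinates:
  "(\<And>i. i < (m::nat) \<Longrightarrow> semialg n {x \<in> Rn n. P i x}) \<Longrightarrow> semialg n {x \<in> Rn n. \<forall>i<m. P i x}"
proof (induction m)
  case 0
  then show ?case using semialg_Rn by simp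
next
  case (Suc m)
  have "{x \<in> Rn n. \<forall>i<Suc m. P i x} = {x \<in> Rn n. \<forall>i<m. P i x} \<inter> {x \<in> Rn n. P m x}"
    by (auto simp: less_Suc_eq)
  then show ?case using Suc by (simp add: semialg.int)
qed

lemma semialg_coordinate_less:
  assumes "i < n" "algebraic a"
  shows "semialg n {x \<in> Rn n. a < x i}" "semialg n {x \<in> Rn n. x i < a}"
  using semialg.pos[OF alg_poly_coordinate_affine[OF assms(1), of 1 "- a"]]
    semialg.pos[OF alg_poly_coordinate_affine[OF assms(1), of "- 1" a]] assms(2)
  by simp_all

lemma semialg_coordinate_le:
  assumes "i < n" "algebraic a"
  shows "semialg n {x \<in> Rn n. a \<le> x i}" "semialg n {x \<in> Rn n. x i \<le> a}"
proof -
  have "{x \<in> Rn n. a \<le> x i} = Rn n - {x \<in> Rn n. x i < a}"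
    "{x \<in> Rn n. x i \<le> a} = Rn n - {x \<in> Rn n. a < x i}" by auto
  then show "semialg n {x \<in> Rn n. a \<le> x i}" "semialg n {x \<in> Rn n. x i \<le> a}"
    using semialg_Rn_Diff semialg_coordinate_less[OF assms] by simp_all
qed

definition cbox_Rn :: "nat \<Rightarrow> (nat \<Rightarrow> real) \<Rightarrow> (nat \<Rightarrow> real) \<Rightarrow> (nat \<Rightarrow> real) set" where
  "cbox_Rn n l u = Pi\<^sub>E {..<n} (\<lambda>i. {l i..u i})"

definition box_Rn :: "nat \<Rightarrow> (nat \<Rightarrow> real) \<Rightarrow> (nat \<Rightarrow> real) \<Rightarrow> (nat \<Rightarrow> real) set" where
  "box_Rn n l u = Pi\<^sub>E {..<n} (\<lambda>i. {l i<..<u i})"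

lemma mem_PiE_lessThan: "x \<in> Pi\<^sub>E {..<n} A \<longleftrightarrow> x \<in> Rn n \<and> (\<forall>i<n. x i \<in> A i)"
  unfolding Rn_def by (auto simp: PiE_iff)

lemma mem_cbox_Rn: "x \<in> cbox_Rn n l u \<longleftrightarrow> x \<in> Rn n \<and> (\<forall>i<n. l i \<le> x i \<and> x i \<le> u i)"
  unfolding cbox_Rn_def mem_PiE_lessThan by simp

lemma mem_box_Rn: "x \<in> box_Rn n l u \<longleftrightarrow> x \<in> Rn n \<and> (\<forall>i<n. l i < x i \<and> x i < u i)"
  unfolding box_Rn_def mem_PiE_lessThan by simp

lemma box_Rn_subset_cbox_Rn:
  "(\<And>i. i < n \<Longrightarrow> l i \<le> l' i) \<Longrightarrow> (\<And>i. i < n \<Longrightarrow> u' i \<le> u i) \<Longrightarrow> box_Rn n l' u' \<subseteq> cbox_Rn n l u"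
  unfolding box_Rn_def cbox_Rn_def by (intro PiE_mono) fastforce

lemma midpoint_in_box_Rn:
  assumes "\<And>i. i < n \<Longrightarrow> l i < u i"
  shows "(\<lambda>i. if i < n then (l i + u i) / 2 else undefined) \<in> box_Rn n l u"
  using assms by (auto simp: mem_box_Rn Rn_def PiE_def extensional_def)

lemma semialg_PiE_lessThan:
  assumes "\<And>i. i < n \<Longrightarrow> semialg n {x \<in> Rn n. x i \<in> A i}"
  shows "semialg n (Pi\<^sub>E {..<n} A)"
proof -
  have "Pi\<^sub>E {..<n} A = {x \<in> Rn n. \<forall>i<n. x i \<in> A i}"
    using mem_PiE_lessThan by blast
  then show ?thesis
    using assms by (simp add: semialg_all_coordinates)
qed

lemma semialg_cbox_Rn:
  assumes "\<And>i. i < n \<Longrightarrow> algebraic (l i) \<and> algebraic (u i)"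
  shows "semialg n (cbox_Rn n l u)"
  unfolding cbox_Rn_def
proof (rule semialg_PiE_lessThan)
  fix i assume i: "i < n"
  have "{x \<in> Rn n. x i \<in> {l i..u i}} = {x \<in> Rn n. l i \<le> x i} \<inter> {x \<in> Rn n. x i \<le> u i}"
    by auto
  then show "semialg n {x \<in> Rn n. x i \<in> {l i..u i}}"
    using semialg.int[OF semialg_coordinate_le(1)[OF i] semialg_coordinate_le(2)[OF i]] assms[OF i] by simp
qed

lemma semialg_box_Rn:
  assumes "\<And>i. i < n \<Longrightarrow> algebraic (l i) \<and> algebraic (u i)"
  shows "semialg n (box_Rn n l u)"
  unfolding box_Rn_def
proof (rule semialg_PiE_lessThan)
  fix i assume i: "i < n"
  have "{x \<in> Rn n. x i \<in> {l i<..<u i}} = {x \<in> Rn n. l i < x i} \<inter> {x \<in> Rn n. x i < u i}"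
    by auto
  then show "semialg n {x \<in> Rn n. x i \<in> {l i<..<u i}}"
    using semialg.int[OF semialg_coordinate_less(1)[OF i] semialg_coordinate_less(2)[OF i]] assms[OF i] by simp
qed

lemma openin_box_Rn: "openin (top_of_set (Rn n)) (box_Rn n l u)"
proof -
  have "{x :: nat \<Rightarrow> real. \<forall>i<n. l i < x i \<and> x i < u i} = (\<Inter>i<n. {x. l i < x i} \<inter> {x. x i < u i})"
    by auto
  moreover have "open {x :: nat \<Rightarrow> real. l i < x i}" "open {x :: nat \<Rightarrow> real. x i < u i}" for i
    by (intro open_Collect_less continuous_intros continuous_on_product_coordinates)+
  ultimately have "open {x :: nat \<Rightarrow> real. \<forall>i<n. l i < x i \<and> x i < u i}"
    by (simp only:) (intro open_INT finite_lessThan ballI open_Int)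
  then show ?thesis
    unfolding openin_open by (intro exI[of _ "{x. \<forall>i<n. l i < x i \<and> x i < u i}"]) (auto simp: mem_box_Rn)
qed

lemma compact_cbox_Rn: "compact (cbox_Rn n l u)"
proof -
  have "cbox_Rn n l u = Pi\<^sub>E UNIV (\<lambda>i. if i < n then {l i..u i} else {undefined})"
    unfolding cbox_Rn_def by (auto simp: PiE_def Pi_def extensional_def)
  moreover have "compactin (product_topology (\<lambda>_. euclidean) UNIV)
      (Pi\<^sub>E UNIV (\<lambda>i. if i < n then {l i..u i} else {undefined :: real}))"
    by (subst compactin_PiE) auto
  ultimately show ?thesis
    by (metis compactin_euclidean_iff euclidean_product_topology)
qed

lemma compact_subset_cbox_Rn:
  fixes K :: "(nat \<Rightarrow> real) set"
  assumes "compact K" "K \<subseteq> Rn n"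
  obtains R :: nat where "K \<subseteq> cbox_Rn n (\<lambda>_. - real R) (\<lambda>_. real R)"
proof -
  have "\<exists>B. \<forall>x\<in>K. \<bar>x i\<bar> \<le> B" for i
  proof -
    have "compact ((\<lambda>x. x i) ` K)"
      using assms(1) by (intro compact_continuous_image continuous_on_subset[OF continuous_on_product_coordinates]) auto
    then show ?thesis
      unfolding bounded_iff[symmetric] by (auto dest: compact_imp_bounded simp: bounded_iff)
  qed
  then obtain B where B: "\<And>i x. x \<in> K \<Longrightarrow> \<bar>x i\<bar> \<le> B i" by metis
  define R where "R = nat \<lceil>\<Sum>i<n. \<bar>B i\<bar>\<rceil>"
  have "\<bar>x i\<bar> \<le> real R" if "x \<in> K" "i < n" for x i
  proof -
    have "\<bar>x i\<bar> \<le> \<bar>B i\<bar>" using B[OF that(1), of i] by linarith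
    also have "\<dots> \<le> (\<Sum>i<n. \<bar>B i\<bar>)" using that(2) by (intro member_le_sum) auto
    also have "\<dots> \<le> real R" unfolding R_def by linarith
    finally show ?thesis .
  qed
  then have "K \<subseteq> cbox_Rn n (\<lambda>_. - real R) (\<lambda>_. real R)"
    using assms(2) unfolding subset_iff mem_cbox_Rn by (meson abs_le_iff minus_le_iff)
  then show ?thesis by (rule that)
qed

lemma prod_lessThan_if_0:
  "0 < k \<Longrightarrow> (\<Prod>i<k. if i = 0 then a else b) = a * b ^ (k - 1)"
  by (cases k) (simp_all del: prod.lessThan_Suc add: prod.lessThan_Suc_shift)

lemma lebn_PiE_measure:
  assumes "\<And>i. i < n \<Longrightarrow> A i \<in> sets borel"
    and "\<And>i. i < n \<Longrightarrow> emeasure lborel (A i) = ennreal (w i)" "\<And>i. i < n \<Longrightarrow> 0 \<le> w i"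
  shows "Pi\<^sub>E {..<n} A \<in> fmeasurable (lebn n)" "measure (lebn n) (Pi\<^sub>E {..<n} A) = (\<Prod>i<n. w i)"
proof -
  interpret product_sigma_finite "\<lambda>_. lborel" by standard
  have "emeasure (lebn n) (Pi\<^sub>E {..<n} A) = (\<Prod>i<n. emeasure lborel (A i))"
    unfolding lebn_def using assms(1) by (intro emeasure_PiM) auto
  also have "\<dots> = (\<Prod>i<n. ennreal (w i))"
    using assms(2) by simp
  also have "\<dots> = ennreal (\<Prod>i<n. w i)"
    using assms(3) by (intro prod_ennreal) simp
  finally have "emeasure (lebn n) (Pi\<^sub>E {..<n} A) = ennreal (\<Prod>i<n. w i)" .
  moreover have "Pi\<^sub>E {..<n} A \<in> sets (lebn n)"
    unfolding lebn_def using assms(1) by (intro sets_PiM_I_finite) auto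
  moreover have "0 \<le> (\<Prod>i<n. w i)"
    using assms(3) by (intro prod_nonneg) simp
  ultimately show "Pi\<^sub>E {..<n} A \<in> fmeasurable (lebn n)" "measure (lebn n) (Pi\<^sub>E {..<n} A) = (\<Prod>i<n. w i)"
    by (auto simp: fmeasurable_def measure_def)
qed

lemma cbox_Rn_measure:
  assumes "\<And>i. i < n \<Longrightarrow> l i \<le> u i"
  shows "cbox_Rn n l u \<in> fmeasurable (lebn n)" "measure (lebn n) (cbox_Rn n l u) = (\<Prod>i<n. u i - l i)"
  unfolding cbox_Rn_def using lebn_PiE_measure[of n "\<lambda>i. {l i..u i}" "\<lambda>i. u i - l i"] assms by auto

lemma box_Rn_measure:
  assumes "\<And>i. i < n \<Longrightarrow> l i \<le> u i"
  shows "box_Rn n l u \<in> fmeasurable (lebn n)" "measure (lebn n) (box_Rn n l u) = (\<Prod>i<n. u i - l i)"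
  unfolding box_Rn_def using lebn_PiE_measure[of n "\<lambda>i. {l i<..<u i}" "\<lambda>i. u i - l i"] assms by auto

lemma cbox_Rn_beside:
  assumes "0 < k" "algebraic c" "0 < c"
  obtains D where "semialg k D" "compact D" "D \<in> fmeasurable (lebn k)" "measure (lebn k) D = c"
    "nonempty_interior k D" "D \<inter> cbox_Rn k (\<lambda>_. - real R) (\<lambda>_. real R) = {}"
proof -
  define l where "l i = (if i = 0 then real R + 1 else 0)" for i :: nat
  define u where "u i = (if i = 0 then c + (real R + 1) else 1)" for i :: nat
  have lu: "l i < u i" for i
    using assms(3) by (simp add: l_def u_def)
  have "u i - l i = (if i = 0 then c else 1)" for i
    by (simp add: l_def u_def)
  then have measure: "cbox_Rn k l u \<in> fmeasurable (lebn k)" "measure (lebn k) (cbox_Rn k l u) = c"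
    using cbox_Rn_measure[of k l u] lu prod_lessThan_if_0[OF assms(1), of c 1] by (auto simp: less_imp_le)
  have "algebraic (l i) \<and> algebraic (u i)" for i
    using algebraic_rat_affine[OF assms(2), of 1 "real R + 1"] by (simp add: l_def u_def rat_imp_algebraic)
  then have "semialg k (cbox_Rn k l u)"
    by (intro semialg_cbox_Rn)
  moreover have "nonempty_interior k (cbox_Rn k l u)"
    by (rule nonempty_interiorI[OF openin_box_Rn midpoint_in_box_Rn[of k l u, OF lu]
          box_Rn_subset_cbox_Rn[of k l l u u, OF order.refl order.refl]])
  moreover have "cbox_Rn k l u \<inter> cbox_Rn k (\<lambda>_. - real R) (\<lambda>_. real R) = {}"
  proof -
    have "x 0 \<le> real R" if "x \<in> cbox_Rn k (\<lambda>_. - real R) (\<lambda>_. real R)" for x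
      using that assms(1) by (auto simp: mem_cbox_Rn)
    moreover have "real R + 1 \<le> x 0" if "x \<in> cbox_Rn k l u" for x
      using that assms(1) by (auto simp: mem_cbox_Rn l_def)
    ultimately show ?thesis by force
  qed
  ultimately show ?thesis
    using that compact_cbox_Rn measure by blast
qed

section \<open>Semialgebraic sets are open up to a null set\<close>

definition open_core :: "nat \<Rightarrow> (nat \<Rightarrow> real) set \<Rightarrow> (nat \<Rightarrow> real) set \<Rightarrow> bool" where
  "open_core n S U \<longleftrightarrow>
    semialg n U \<and> U \<subseteq> S \<and> openin (top_of_set (Rn n)) U \<and> S - U \<in> null_sets (lebn n)"

lemma open_core_Un_Int:
  assumes "semialg n A" "semialg n B" "open_core n A UA" "open_core n B UB"
  shows "open_core n (A \<union> B) (UA \<union> UB)" "open_core n (A \<inter> B) (UA \<inter> UB)"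
proof -
  have sets: "A \<in> sets (lebn n)" "B \<in> sets (lebn n)" "UA \<in> sets (lebn n)" "UB \<in> sets (lebn n)"
    using assms by (auto simp: open_core_def intro: semialg_sets_lebn)
  have null: "(A - UA) \<union> (B - UB) \<in> null_sets (lebn n)"
    using assms(3,4) by (auto simp: open_core_def)
  have "(A \<union> B) - (UA \<union> UB) \<in> null_sets (lebn n)" "(A \<inter> B) - (UA \<inter> UB) \<in> null_sets (lebn n)"
    using sets by (auto intro!: null_sets_subset[OF null])
  then show "open_core n (A \<union> B) (UA \<union> UB)" "open_core n (A \<inter> B) (UA \<inter> UB)"
    using assms(3,4) by (auto simp: open_core_def intro: semialg.un semialg.int)
qed

lemma semialg_open_core: "semialg n S \<Longrightarrow> \<exists>U. open_core n S U"
proof (induction rule: semialg.induct)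
  case (eq f)
  show ?case
  proof (cases "\<exists>x\<in>Rn n. f x \<noteq> 0")
    case True
    then show ?thesis
      using poly_fun_zero_set_null[OF alg_poly_imp_poly_fun[OF eq]] semialg_empty
      by (intro exI[of _ "{}"]) (auto simp: open_core_def)
  next
    case False
    then have "{x \<in> Rn n. f x = 0} = Rn n" by auto
    then show ?thesis
      using semialg_Rn by (intro exI[of _ "Rn n"]) (auto simp: open_core_def)
  qed
next
  case (pos g)
  then show ?case
    using openin_poly_fun_pos[OF alg_poly_imp_poly_fun] semialg.pos
    by (intro exI[of _ "{x \<in> Rn n. g x > 0}"]) (auto simp: open_core_def)
next
  case (un A B)
  then show ?case using open_core_Un_Int(1) by blast
next
  case (int A B)
  then show ?case using open_core_Un_Int(2) by blast
qed

lemma semialg_open_core_measure: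
  assumes "semialg n S"
  obtains U where "semialg n U" "U \<subseteq> S" "openin (top_of_set (Rn n)) U"
    "measure (lebn n) U = measure (lebn n) S"
proof -
  obtain U where U: "semialg n U" "U \<subseteq> S" "openin (top_of_set (Rn n)) U" "S - U \<in> null_sets (lebn n)"
    using semialg_open_core[OF assms] unfolding open_core_def by blast
  have "measure (lebn n) (S - (S - U)) = measure (lebn n) S"
    using semialg_sets_lebn[OF assms] U(4) by (rule measure_Diff_null_set)
  moreover have "S - (S - U) = U" using U(2) by blast
  ultimately show ?thesis using that[OF U(1-3)] by simp
qed

lemma semialg_fmeasurable:
  assumes "semialg n S" "S \<subseteq> cbox_Rn n (\<lambda>_. - R) (\<lambda>_. R)" "0 \<le> R"
  shows "S \<in> fmeasurable (lebn n)"
proof (rule fmeasurableI2)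
  show "cbox_Rn n (\<lambda>_. - R) (\<lambda>_. R) \<in> fmeasurable (lebn n)"
    using assms(3) by (intro cbox_Rn_measure) simp
qed (use assms semialg_sets_lebn in auto)

section \<open>Inner approximation by dyadic cubes\<close>

lemma emeasure_less_eventually_covered:
  assumes "A \<in> sets M" "\<And>m. G m \<in> sets M"
    and "\<And>x. x \<in> A \<Longrightarrow> eventually (\<lambda>m. x \<in> G m) sequentially"
    and "c < emeasure M A"
  obtains m where "c < emeasure M (G m)"
proof -
  have "emeasure M A = (\<integral>\<^sup>+ x. indicator A x \<partial>M)"
    using assms(1) by simp
  also have "\<dots> \<le> (\<integral>\<^sup>+ x. liminf (\<lambda>m. indicator (G m) x) \<partial>M)"
  proof (intro nn_integral_mono)
    fix x
    show "indicator A x \<le> liminf (\<lambda>m. indicator (G m) x :: ennreal)"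
    proof (cases "x \<in> A")
      case True
      have "eventually (\<lambda>m. 1 \<le> (indicator (G m) x :: ennreal)) sequentially"
        using assms(3)[OF True] by eventually_elim simp
      then show ?thesis using True by (simp add: Liminf_bounded)
    qed simp
  qed
  also have "\<dots> \<le> liminf (\<lambda>m. \<integral>\<^sup>+ x. indicator (G m) x \<partial>M)"
    using assms(2) by (intro nn_integral_liminf) simp
  also have "\<dots> = liminf (\<lambda>m. emeasure M (G m))"
    using assms(2) by simp
  finally have "c < liminf (\<lambda>m. emeasure M (G m))"
    by (rule less_le_trans[OF assms(4)])
  then have "eventually (\<lambda>m. c < emeasure M (G m)) sequentially"
    by (rule less_LiminfD)
  then show ?thesis
    using that by (auto simp: eventually_sequentially)
qed

definition dyadic_cube :: "nat \<Rightarrow> nat \<Rightarrow> (nat \<Rightarrow> int) \<Rightarrow> (nat \<Rightarrow> real) set" where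
  "dyadic_cube k m z = Pi\<^sub>E {..<k} (\<lambda>i. {of_int (z i) / 2 ^ m ..< (of_int (z i) + 1) / 2 ^ m})"

lemma mem_dyadic_cube:
  "y \<in> dyadic_cube k m z \<longleftrightarrow> y \<in> Rn k \<and> (\<forall>i<k. z i = \<lfloor>y i * 2 ^ m\<rfloor>)"
proof -
  have "of_int (z i) / 2 ^ m \<le> t \<and> t < (of_int (z i) + 1) / 2 ^ m \<longleftrightarrow> z i = \<lfloor>t * 2 ^ m\<rfloor>"
    for i and t :: real
    by (simp add: field_simps floor_eq_iff eq_commute[of "z i"] add.commute)
  then show ?thesis
    unfolding dyadic_cube_def mem_PiE_lessThan by auto
qed

lemma dyadic_cube_measure:
  "dyadic_cube k m z \<in> fmeasurable (lebn k)" "measure (lebn k) (dyadic_cube k m z) = (1 / 2 ^ m) ^ k"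
proof -
  have "(of_int (z i) + 1) / 2 ^ m - of_int (z i) / 2 ^ m = (1 / 2 ^ m :: real)" for i
    by (simp add: field_simps)
  then show "dyadic_cube k m z \<in> fmeasurable (lebn k)" "measure (lebn k) (dyadic_cube k m z) = (1 / 2 ^ m) ^ k"
    unfolding dyadic_cube_def
    using lebn_PiE_measure[of k "\<lambda>i. {of_int (z i) / 2 ^ m ..< (of_int (z i) + 1) / 2 ^ m}" "\<lambda>_. 1 / 2 ^ m"]
    by (auto simp: divide_right_mono)
qed

lemma dyadic_cube_disjoint:
  assumes "\<forall>i\<ge>k. z i = 0" "\<forall>i\<ge>k. z' i = 0" "z \<noteq> z'"
  shows "disjnt (dyadic_cube k m z) (dyadic_cube k m z')"
proof -
  have "z i = z' i" if "y \<in> dyadic_cube k m z" "y \<in> dyadic_cube k m z'" for y i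
    using that assms(1,2) by (cases "i < k") (auto simp: mem_dyadic_cube)
  then show ?thesis using assms(3) by (auto simp: disjnt_def)
qed

lemma dyadic_cube_small:
  assumes "x \<in> dyadic_cube k m z" "y \<in> dyadic_cube k m z" "i < k"
  shows "\<bar>y i - x i\<bar> < 1 / 2 ^ m"
proof -
  have "\<lfloor>x i * 2 ^ m\<rfloor> = \<lfloor>y i * 2 ^ m\<rfloor>"
    using assms by (auto simp: mem_dyadic_cube)
  then have "\<bar>y i * 2 ^ m - x i * 2 ^ m\<bar> < 1"
    by linarith
  then have "\<bar>y i - x i\<bar> * 2 ^ m < 1"
    by (simp add: abs_mult flip: left_diff_distrib)
  then show ?thesis
    by (simp add: pos_less_divide_eq)
qed

lemma finite_dyadic_cubes_in_cbox:
  "finite {z. (\<forall>i\<ge>k. z i = 0) \<and> dyadic_cube k m z \<subseteq> cbox_Rn k (\<lambda>_. - R) (\<lambda>_. R)}"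
proof -
  define N where "N = \<lceil>R * 2 ^ m\<rceil>"
  have "z i \<in> {- N..N}" if z: "dyadic_cube k m z \<subseteq> cbox_Rn k (\<lambda>_. - R) (\<lambda>_. R)" and "i < k" for z i
  proof -
    have "(\<lambda>i. if i < k then of_int (z i) / 2 ^ m else undefined) \<in> dyadic_cube k m z"
      unfolding mem_dyadic_cube Rn_def by (auto simp: PiE_def extensional_def)
    then have "(\<lambda>i. if i < k then of_int (z i) / 2 ^ m else undefined) \<in> cbox_Rn k (\<lambda>_. - R) (\<lambda>_. R)"
      using z by blast
    then have "\<bar>of_int (z i) / 2 ^ m\<bar> \<le> R"
      using \<open>i < k\<close> unfolding mem_cbox_Rn by (auto simp: abs_le_iff)
    then have "\<bar>of_int (z i)\<bar> \<le> R * 2 ^ m"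
      by (simp add: field_simps abs_divide)
    then have "(of_int (z i) :: real) \<le> of_int N \<and> - of_int N \<le> (of_int (z i) :: real)"
      using le_of_int_ceiling[of "R * 2 ^ m"] unfolding N_def abs_le_iff by linarith
    then show ?thesis by simp
  qed
  then have "{z. (\<forall>i\<ge>k. z i = 0) \<and> dyadic_cube k m z \<subseteq> cbox_Rn k (\<lambda>_. - R) (\<lambda>_. R)} \<subseteq>
      {z. \<forall>i. (i \<in> {..<k} \<longrightarrow> z i \<in> {- N..N}) \<and> (i \<notin> {..<k} \<longrightarrow> z i = 0)}"
    by auto
  moreover have "finite {z. \<forall>i. (i \<in> {..<k} \<longrightarrow> z i \<in> {- N..N}) \<and> (i \<notin> {..<k} \<longrightarrow> z i = 0)}"
    by (rule finite_set_of_finite_funs) auto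
  ultimately show ?thesis by (rule finite_subset)
qed

lemma eventually_dyadic_cube_in_openin:
  assumes "openin (top_of_set (Rn k)) U" "x \<in> U"
  shows "eventually (\<lambda>m. \<exists>z. (\<forall>i\<ge>k. z i = 0) \<and> x \<in> dyadic_cube k m z \<and> dyadic_cube k m z \<subseteq> U)
    sequentially"
proof -
  obtain e where e: "e > 0" "\<And>y. y \<in> Rn k \<Longrightarrow> \<forall>i<k. \<bar>y i - x i\<bar> < e \<Longrightarrow> y \<in> U"
    using openin_Rn_box_neighbourhood[OF assms] by blast
  obtain m0 where m0: "(1 / 2) ^ m0 < e"
    using real_arch_pow_inv[OF e(1), of "1 / 2"] by auto
  have "\<exists>z. (\<forall>i\<ge>k. z i = 0) \<and> x \<in> dyadic_cube k m z \<and> dyadic_cube k m z \<subseteq> U" if "m0 \<le> m" for m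
  proof -
    define z where "z i = (if i < k then \<lfloor>x i * 2 ^ m\<rfloor> else 0)" for i
    have "x \<in> Rn k" using assms openin_imp_subset by blast
    then have xz: "x \<in> dyadic_cube k m z" by (simp add: mem_dyadic_cube z_def)
    have "(1 / 2) ^ m \<le> (1 / 2 :: real) ^ m0"
      using \<open>m0 \<le> m\<close> by (intro power_decreasing) auto
    then have "dyadic_cube k m z \<subseteq> U"
      using e(2) dyadic_cube_small[OF xz] m0 by (force simp: mem_dyadic_cube power_one_over)
    moreover have "\<forall>i\<ge>k. z i = 0" by (simp add: z_def)
    ultimately show ?thesis using xz by blast
  qed
  then show ?thesis unfolding eventually_sequentially by blast
qed

lemma dyadic_cubes_inner_approx:
  assumes U: "openin (top_of_set (Rn k)) U" "U \<in> fmeasurable (lebn k)"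
      "U \<subseteq> cbox_Rn k (\<lambda>_. - R) (\<lambda>_. R)"
    and b: "0 \<le> b" "b < measure (lebn k) U"
  obtains Z m where "finite Z" "\<And>z. z \<in> Z \<Longrightarrow> (\<forall>i\<ge>k. z i = 0) \<and> dyadic_cube k m z \<subseteq> U"
    "b < real (card Z) * (1 / 2 ^ m) ^ k"
proof -
  define Z where "Z m = {z. (\<forall>i\<ge>k. z i = 0) \<and> dyadic_cube k m z \<subseteq> U}" for m
  define G where "G m = (\<Union>z\<in>Z m. dyadic_cube k m z)" for m
  have fin: "finite (Z m)" for m
    using U(3) by (intro finite_subset[OF _ finite_dyadic_cubes_in_cbox[of k m R]]) (auto simp: Z_def)
  have G: "G m \<in> fmeasurable (lebn k)" for m
    unfolding G_def using fin dyadic_cube_measure(1) by (intro fmeasurable.finite_UN)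
  have "measure (lebn k) (G m) = (\<Sum>z\<in>Z m. measure (lebn k) (dyadic_cube k m z))" for m
    unfolding G_def using fin dyadic_cube_measure(1)
    by (intro measure_UNION') (auto simp: pairwise_def Z_def intro: dyadic_cube_disjoint)
  then have measure_G: "measure (lebn k) (G m) = real (card (Z m)) * (1 / 2 ^ m) ^ k" for m
    by (simp add: dyadic_cube_measure(2))
  have "eventually (\<lambda>m. x \<in> G m) sequentially" if "x \<in> U" for x
    using eventually_dyadic_cube_in_openin[OF U(1) that] by eventually_elim (auto simp: G_def Z_def)
  moreover have "ennreal b < emeasure (lebn k) U"
    using b U(2) by (simp add: emeasure_eq_ennreal_measure fmeasurableD2 ennreal_less_iff)
  ultimately obtain m where "ennreal b < emeasure (lebn k) (G m)"
    using emeasure_less_eventually_covered[of U "lebn k" G] U(2) G by blast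
  then have "b < real (card (Z m)) * (1 / 2 ^ m) ^ k"
    using b(1) G[of m] measure_G[of m] by (simp add: emeasure_eq_ennreal_measure fmeasurableD2 ennreal_less_iff)
  then show ?thesis
    using that[OF fin] unfolding Z_def by blast
qed

definition dyadic_corner :: "nat \<Rightarrow> (nat \<Rightarrow> int) \<Rightarrow> nat \<Rightarrow> real" where
  "dyadic_corner m z i = of_int (z i) / 2 ^ m"

definition slab_top :: "nat \<Rightarrow> real \<Rightarrow> (nat \<Rightarrow> int) \<Rightarrow> nat \<Rightarrow> real" where
  "slab_top m t z i = (of_int (z i) + (if i = 0 then t else 1)) / 2 ^ m"

lemma dyadic_corner_le_slab_top: "0 \<le> t \<Longrightarrow> dyadic_corner m z i \<le> slab_top m t z i"
  by (simp add: dyadic_corner_def slab_top_def divide_right_mono)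

lemma box_slab_subset_dyadic_cube:
  assumes "t \<le> 1"
  shows "box_Rn k (dyadic_corner m z) (slab_top m t z) \<subseteq> dyadic_cube k m z"
proof -
  have "slab_top m t z i \<le> (of_int (z i) + 1) / 2 ^ m" for i
    using assms by (simp add: slab_top_def divide_right_mono)
  then show ?thesis
    unfolding box_Rn_def dyadic_cube_def
    by (intro PiE_mono subsetI) (force simp: dyadic_corner_def intro: order.strict_trans2)
qed

lemma algebraic_slab_corners:
  assumes "algebraic t"
  shows "algebraic (dyadic_corner m z i) \<and> algebraic (slab_top m t z i)"
proof -
  have "slab_top m t z i = (if i = 0 then (1 / 2 ^ m) * t + of_int (z i) / 2 ^ m else (of_int (z i) + 1) / 2 ^ m)"
    by (simp add: slab_top_def add_divide_distrib)
  then show ?thesis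
    using algebraic_rat_affine[OF assms, of "1 / 2 ^ m" "of_int (z i) / 2 ^ m"]
    by (cases "i = 0") (simp_all add: dyadic_corner_def rat_imp_algebraic)
qed

lemma measure_dyadic_slabs:
  fixes m :: nat and t :: real
  assumes "0 < k" "finite Z" "\<And>z. z \<in> Z \<Longrightarrow> \<forall>i\<ge>k. z i = 0" "0 \<le> t" "t \<le> 1"
  defines "C \<equiv> \<Union>z\<in>Z. cbox_Rn k (dyadic_corner m z) (slab_top m t z)"
  shows "measure (lebn k) (\<Union>z\<in>Z. box_Rn k (dyadic_corner m z) (slab_top m t z)) = real (card Z) * t * (1 / 2 ^ m) ^ k"
    and "C \<in> fmeasurable (lebn k)" "measure (lebn k) C \<le> real (card Z) * t * (1 / 2 ^ m) ^ k"
proof -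
  have sides: "dyadic_corner m z i \<le> slab_top m t z i" for z i
    using assms(4) by (rule dyadic_corner_le_slab_top)
  have "slab_top m t z i - dyadic_corner m z i = (if i = 0 then t / 2 ^ m else 1 / 2 ^ m)" for z i
    by (simp add: slab_top_def dyadic_corner_def field_simps)
  then have vol: "(\<Prod>i<k. slab_top m t z i - dyadic_corner m z i) = t * (1 / 2 ^ m) ^ k" for z
    using prod_lessThan_if_0[OF assms(1), of "t / 2 ^ m" "1 / 2 ^ m"] assms(1)
    by (simp add: power_eq_if[of "1 / 2 ^ m" k])
  have "pairwise (\<lambda>z z'. disjnt (box_Rn k (dyadic_corner m z) (slab_top m t z))
      (box_Rn k (dyadic_corner m z') (slab_top m t z'))) Z"
    unfolding pairwise_def
  proof (intro ballI impI)
    fix z z' assume "z \<in> Z" "z' \<in> Z" "z \<noteq> z'"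
    then have "disjnt (dyadic_cube k m z) (dyadic_cube k m z')"
      using assms(3) by (intro dyadic_cube_disjoint) auto
    then show "disjnt (box_Rn k (dyadic_corner m z) (slab_top m t z)) (box_Rn k (dyadic_corner m z') (slab_top m t z'))"
      using box_slab_subset_dyadic_cube[OF assms(5)] by (meson disjnt_subset1 disjnt_subset2)
  qed
  then show "measure (lebn k) (\<Union>z\<in>Z. box_Rn k (dyadic_corner m z) (slab_top m t z)) = real (card Z) * t * (1 / 2 ^ m) ^ k"
    using assms(2) box_Rn_measure[OF sides] vol by (subst measure_UNION') auto
  show "C \<in> fmeasurable (lebn k)"
    unfolding C_def using assms(2) cbox_Rn_measure(1)[OF sides] by (intro fmeasurable.finite_UN)
  have "measure (lebn k) C \<le> (\<Sum>z\<in>Z. measure (lebn k) (cbox_Rn k (dyadic_corner m z) (slab_top m t z)))"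
    unfolding C_def using assms(2) cbox_Rn_measure(1)[OF sides] by (intro measure_UNION_le) auto
  then show "measure (lebn k) C \<le> real (card Z) * t * (1 / 2 ^ m) ^ k"
    using cbox_Rn_measure(2)[OF sides] vol by simp
qed

lemma openin_Rn_Diff_closed:
  assumes "openin (top_of_set (Rn n)) U" "U \<in> sets (lebn n)"
    and "closed C" "C \<in> fmeasurable (lebn n)" "measure (lebn n) C < measure (lebn n) U"
  shows "openin (top_of_set (Rn n)) (U - C)" "U - C \<noteq> {}"
proof -
  have "U - C = U - (Rn n \<inter> C)"
    using openin_imp_subset[OF assms(1)] by blast
  then show "openin (top_of_set (Rn n)) (U - C)"
    using assms(1,3) by (simp add: openin_diff closedin_closed_Int)
  show "U - C \<noteq> {}"
    using measure_mono_fmeasurable[OF _ assms(2,4)] assms(5) by force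
qed

lemma dyadic_cubes_fraction:
  assumes U: "openin (top_of_set (Rn k)) U" "U \<in> fmeasurable (lebn k)"
      "U \<subseteq> cbox_Rn k (\<lambda>_. - R) (\<lambda>_. R)"
    and b: "algebraic b" "0 < b" "b < measure (lebn k) U"
  obtains Z m t where "finite Z" "\<And>z. z \<in> Z \<Longrightarrow> (\<forall>i\<ge>k. z i = 0) \<and> dyadic_cube k m z \<subseteq> U"
    "algebraic (t :: real)" "0 < t" "t < 1" "real (card Z) * t * (1 / 2 ^ m) ^ k = b"
proof -
  obtain Z m where Z: "finite Z" "\<And>z. z \<in> Z \<Longrightarrow> (\<forall>i\<ge>k. z i = 0) \<and> dyadic_cube k m z \<subseteq> U"
    "b < real (card Z) * (1 / 2 ^ m) ^ k"
    using dyadic_cubes_inner_approx[OF U less_imp_le[OF b(2)] b(3)] by blast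
  define t where "t = b / (real (card Z) * (1 / 2 ^ m) ^ k)"
  have pos: "0 < real (card Z) * (1 / 2 ^ m) ^ k"
    using Z(3) b(2) by linarith
  then have "0 < card Z"
    by (simp add: zero_less_mult_iff)
  with pos have "0 < t" "t < 1" "real (card Z) * t * (1 / 2 ^ m) ^ k = b"
    using Z(3) b(2) by (simp_all add: t_def)
  moreover have "algebraic t"
    using algebraic_rat_affine[OF b(1), of "1 / (real (card Z) * (1 / 2 ^ m) ^ k)" 0] by (simp add: t_def)
  ultimately show ?thesis
    using that[OF Z(1,2)] by blast
qed

lemma openin_Rn_semialg_subset_of_measure:
  assumes k: "0 < k"
    and U: "openin (top_of_set (Rn k)) U" "U \<in> fmeasurable (lebn k)"
      "U \<subseteq> cbox_Rn k (\<lambda>_. - R) (\<lambda>_. R)"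
    and b: "algebraic b" "0 < b" "b < measure (lebn k) U"
  obtains V where "semialg k V" "V \<subseteq> U" "openin (top_of_set (Rn k)) V" "measure (lebn k) V = b"
    "nonempty_interior k (U - V)"
proof -
  obtain Z m t where Z: "finite Z" "\<And>z. z \<in> Z \<Longrightarrow> (\<forall>i\<ge>k. z i = 0) \<and> dyadic_cube k m z \<subseteq> U"
    and t: "algebraic t" "0 < t" "t < 1" "real (card Z) * t * (1 / 2 ^ m) ^ k = b"
    using dyadic_cubes_fraction[OF U b] by blast
  \<comment> \<open>from each of these cubes cut out a slab with the same fraction \<open>t\<close> of its volume\<close>
  define V where "V = (\<Union>z\<in>Z. box_Rn k (dyadic_corner m z) (slab_top m t z))"
  define C where "C = (\<Union>z\<in>Z. cbox_Rn k (dyadic_corner m z) (slab_top m t z))"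
  have "\<forall>i\<ge>k. z i = 0" if "z \<in> Z" for z
    using Z(2)[OF that] by blast
  then have slabs: "measure (lebn k) V = b" "C \<in> fmeasurable (lebn k)" "measure (lebn k) C \<le> b"
    using measure_dyadic_slabs[OF k Z(1) _ less_imp_le[OF t(2)] less_imp_le[OF t(3)], of m] t(4)
    unfolding V_def C_def by simp_all
  have "semialg k V"
    unfolding V_def using Z(1) algebraic_slab_corners[OF t(1)] by (intro semialg_UN semialg_box_Rn) auto
  moreover have "V \<subseteq> U"
    using box_slab_subset_dyadic_cube[OF less_imp_le[OF t(3)]] Z(2) unfolding V_def by blast
  moreover have "openin (top_of_set (Rn k)) V"
    unfolding V_def by (intro openin_Union) (auto intro: openin_box_Rn)
  moreover note slabs(1)
  moreover have "nonempty_interior k (U - V)"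
  proof -
    have "closed C"
      unfolding C_def using Z(1) by (intro compact_imp_closed compact_UN compact_cbox_Rn)
    then have W: "openin (top_of_set (Rn k)) (U - C)" "U - C \<noteq> {}"
      using openin_Rn_Diff_closed[OF U(1) fmeasurableD[OF U(2)]] slabs(2,3) b(3) by auto
    obtain x where x: "x \<in> U - C"
      using W(2) by blast
    have "box_Rn k (dyadic_corner m z) (slab_top m t z) \<subseteq> cbox_Rn k (dyadic_corner m z) (slab_top m t z)" for z
      by (rule box_Rn_subset_cbox_Rn) simp_all
    then have "U - C \<subseteq> U - V"
      unfolding V_def C_def by blast
    then show ?thesis
      by (rule nonempty_interiorI[OF W(1) x])
  qed
  ultimately show ?thesis
    by (rule that)
qed

section \<open>Volumes of compact sets in SA^k\<close>

definition SA_volume :: "nat \<Rightarrow> real \<Rightarrow> bool" where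
  "SA_volume k v \<longleftrightarrow> (\<exists>K. K \<in> SA k \<and> compact K \<and> v = measure (lebn k) K)"

lemma SA_volumeE:
  assumes "SA_volume k v"
  obtains K R where "semialg k K" "nonempty_interior k K" "compact K" "v = measure (lebn k) K"
    "K \<subseteq> cbox_Rn k (\<lambda>_. - real R) (\<lambda>_. real R)" "K \<in> fmeasurable (lebn k)"
proof -
  obtain K where K: "semialg k K" "nonempty_interior k K" "compact K" "v = measure (lebn k) K"
    using assms unfolding SA_volume_def SA_def by blast
  moreover obtain R :: nat where R: "K \<subseteq> cbox_Rn k (\<lambda>_. - real R) (\<lambda>_. real R)"
    using compact_subset_cbox_Rn[OF K(3) semialg_subset_Rn[OF K(1)]] by blast
  moreover have "K \<in> fmeasurable (lebn k)"
    using semialg_fmeasurable[OF K(1) R] by simp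
  ultimately show ?thesis using that by blast
qed

lemma SA_volumeI:
  "semialg k K \<Longrightarrow> nonempty_interior k K \<Longrightarrow> compact K \<Longrightarrow> SA_volume k (measure (lebn k) K)"
  unfolding SA_volume_def SA_def by blast

lemma SA_volume_add:
  assumes "0 < k" "SA_volume k v" "algebraic c" "0 < c"
  shows "SA_volume k (v + c)"
proof -
  obtain K R where K: "semialg k K" "nonempty_interior k K" "compact K" "v = measure (lebn k) K"
    "K \<subseteq> cbox_Rn k (\<lambda>_. - real R) (\<lambda>_. real R)" "K \<in> fmeasurable (lebn k)"
    using assms(2) by (rule SA_volumeE)
  obtain D where D: "semialg k D" "compact D" "D \<in> fmeasurable (lebn k)" "measure (lebn k) D = c"
    "D \<inter> cbox_Rn k (\<lambda>_. - real R) (\<lambda>_. real R) = {}"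
    using cbox_Rn_beside[OF assms(1,3,4)] by blast
  have "measure (lebn k) (K \<union> D) = v + c"
    using K(4,5,6) D(3,4,5) by (subst measure_Union) (auto simp: fmeasurableD2)
  moreover have "nonempty_interior k (K \<union> D)"
    using K(2) by (rule nonempty_interior_mono[rotated]) blast
  ultimately show ?thesis
    using SA_volumeI[OF semialg.un[OF K(1) D(1)]] compact_Un[OF K(3) D(2)] by simp
qed

lemma SA_volume_Diff_superset:
  assumes B: "semialg k B" "compact B" "B \<in> fmeasurable (lebn k)"
    and K: "semialg k K" "K \<subseteq> B" "nonempty_interior k (B - K)"
  shows "SA_volume k (measure (lebn k) B - measure (lebn k) K)"
proof -
  obtain U where U: "semialg k U" "U \<subseteq> K" "openin (top_of_set (Rn k)) U"
    "measure (lebn k) U = measure (lebn k) K"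
    using K(1) by (rule semialg_open_core_measure)
  have "semialg k (B - U)"
    using B(1) U(1) by (rule semialg_Diff)
  moreover have "nonempty_interior k (B - U)"
    using K(3) by (rule nonempty_interior_mono[rotated]) (use U(2) in blast)
  moreover have "compact (B - U)"
    using B(2) semialg_subset_Rn[OF B(1)] U(3) by (rule compact_Diff_openin_Rn)
  moreover have "measure (lebn k) (B - U) = measure (lebn k) B - measure (lebn k) K"
    using B(3) K(2) U(2,4) semialg_sets_lebn[OF U(1)] by (subst measure_Diff) (auto simp: fmeasurableD2)
  ultimately show ?thesis
    using SA_volumeI[of k "B - U"] by simp
qed

lemma SA_volume_complement:
  assumes "0 < k" "SA_volume k v"
  obtains N :: nat where "SA_volume k (real N - v)"
proof -
  obtain K R where K: "semialg k K" "v = measure (lebn k) K"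
    "K \<subseteq> cbox_Rn k (\<lambda>_. - real R) (\<lambda>_. real R)"
    using assms(2) by (rule SA_volumeE)
  define Q where "Q = cbox_Rn k (\<lambda>_. - real R) (\<lambda>_. real R)"
  obtain D where D: "semialg k D" "compact D" "D \<in> fmeasurable (lebn k)" "measure (lebn k) D = 1"
    "nonempty_interior k D" "D \<inter> Q = {}"
    using cbox_Rn_beside[OF assms(1) _ zero_less_one, of R] unfolding Q_def by (auto simp: rat_imp_algebraic)
  have "semialg k Q"
    unfolding Q_def by (intro semialg_cbox_Rn) (simp add: rat_imp_algebraic)
  moreover have "Q \<in> fmeasurable (lebn k)" "measure (lebn k) Q = (2 * R) ^ k"
    using cbox_Rn_measure[of k "\<lambda>_. - real R" "\<lambda>_. real R"] unfolding Q_def by simp_all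
  ultimately have Q: "semialg k Q" "compact Q" "Q \<in> fmeasurable (lebn k)" "measure (lebn k) Q = (2 * R) ^ k"
    unfolding Q_def by (simp_all add: compact_cbox_Rn)
  have "SA_volume k (measure (lebn k) (Q \<union> D) - measure (lebn k) K)"
  proof (rule SA_volume_Diff_superset)
    show "semialg k (Q \<union> D)" "compact (Q \<union> D)" "Q \<union> D \<in> fmeasurable (lebn k)"
      using Q D by (auto intro: semialg.un compact_Un)
    have "D \<subseteq> Q \<union> D - K"
      using D(6) K(3) unfolding Q_def by blast
    then show "nonempty_interior k (Q \<union> D - K)"
      using D(5) by (rule nonempty_interior_mono)
    show "semialg k K" "K \<subseteq> Q \<union> D"
      using K(1,3) unfolding Q_def by auto
  qed
  moreover have "measure (lebn k) (Q \<union> D) = real ((2 * R) ^ k + 1)"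
    using Q(3,4) D(3,4,6) by (subst measure_Union) (auto simp: fmeasurableD2 Int_commute)
  ultimately show ?thesis
    using that[of "(2 * R) ^ k + 1"] K(2) by simp
qed

lemma SA_volume_diff:
  assumes "0 < k" "SA_volume k v" "algebraic b" "0 < b" "b < v"
  shows "SA_volume k (v - b)"
proof -
  obtain K R where K: "semialg k K" "compact K" "v = measure (lebn k) K"
    "K \<subseteq> cbox_Rn k (\<lambda>_. - real R) (\<lambda>_. real R)" "K \<in> fmeasurable (lebn k)"
    using assms(2) by (rule SA_volumeE)
  obtain U where U: "semialg k U" "U \<subseteq> K" "openin (top_of_set (Rn k)) U"
    "measure (lebn k) U = measure (lebn k) K"
    using K(1) by (rule semialg_open_core_measure)
  have U_box: "U \<subseteq> cbox_Rn k (\<lambda>_. - real R) (\<lambda>_. real R)"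
    using U(2) K(4) by blast
  have "U \<in> fmeasurable (lebn k)"
    using semialg_fmeasurable[OF U(1) U_box] by simp
  moreover have "b < measure (lebn k) U"
    using assms(5) U(4) K(3) by simp
  ultimately obtain V where V: "semialg k V" "V \<subseteq> U" "openin (top_of_set (Rn k)) V"
      "measure (lebn k) V = b" "nonempty_interior k (U - V)"
    using openin_Rn_semialg_subset_of_measure[OF assms(1) U(3) _ U_box assms(3,4)] by blast
  have "nonempty_interior k (K - V)"
    using V(5) by (rule nonempty_interior_mono[rotated]) (use U(2) in blast)
  moreover have "compact (K - V)"
    using K(2) semialg_subset_Rn[OF K(1)] V(3) by (rule compact_Diff_openin_Rn)
  moreover have "measure (lebn k) (K - V) = v - b"
    using K(3,5) V(2,4) U(2) semialg_sets_lebn[OF V(1)] by (subst measure_Diff) (auto simp: fmeasurableD2)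
  ultimately show ?thesis
    using SA_volumeI[OF semialg_Diff[OF K(1) V(1)]] by simp
qed

lemma SA_volume_add_algebraic:
  assumes "0 < k" "SA_volume k v" "algebraic c" "0 < v + c"
  shows "SA_volume k (v + c)"
proof (cases c "0 :: real" rule: linorder_cases)
  case less
  then show ?thesis using SA_volume_diff[OF assms(1,2), of "- c"] assms(3,4) by simp
next
  case equal
  then show ?thesis using assms(2) by simp
next
  case greater
  then show ?thesis using SA_volume_add[OF assms(1-3)] by simp
qed

lemma SA_volume_algebraic_minus:
  assumes "0 < k" "SA_volume k v" "algebraic c" "v < c"
  shows "SA_volume k (c - v)"
proof -
  obtain N :: nat where "SA_volume k (real N - v)"
    using SA_volume_complement[OF assms(1,2)] by blast
  moreover have "algebraic (c - real N)"
    using algebraic_rat_affine[OF assms(3), of 1 "- real N"] by simp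
  ultimately have "SA_volume k ((real N - v) + (c - real N))"
    using assms(4) by (intro SA_volume_add_algebraic[OF assms(1)]) auto
  then show ?thesis by simp
qed

lemma SA_volume_reflect:
  assumes "0 < k" "algebraic a" "x \<noteq> 0" "x \<noteq> a" "SA_volume k \<bar>x\<bar>"
  shows "SA_volume k \<bar>a - x\<bar>"
proof -
  have pos: "0 < \<bar>a - x\<bar>" using assms(4) by simp
  consider "\<bar>a - x\<bar> = \<bar>x\<bar> + a" | "\<bar>a - x\<bar> = \<bar>x\<bar> + - a" | "\<bar>a - x\<bar> = a - \<bar>x\<bar>" | "\<bar>a - x\<bar> = - a - \<bar>x\<bar>"
    by (cases "0 < x"; cases "0 < a - x") auto
  then show ?thesis
  proof cases
    case 1
    then show ?thesis using SA_volume_add_algebraic[OF assms(1,5,2)] pos by simp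
  next
    case 2
    then show ?thesis using SA_volume_add_algebraic[OF assms(1,5), of "- a"] assms(2) pos by simp
  next
    case 3
    then show ?thesis using SA_volume_algebraic_minus[OF assms(1,5,2)] pos by simp
  next
    case 4
    then show ?thesis using SA_volume_algebraic_minus[OF assms(1,5), of "- a"] assms(2) pos by simp
  qed
qed

lemma period_deg_SA_volume:
  "period_deg p = (if p = 0 then 0 else LEAST k. 0 < k \<and> SA_volume k \<bar>p\<bar>)"
  unfolding period_deg_def SA_volume_def by simp

lemma period_deg_algebraic_minus:
  assumes "algebraic a" "x \<noteq> 0" "x \<noteq> a"
  shows "period_deg (a - x) = period_deg x"
proof -
  have "0 < k \<and> SA_volume k \<bar>a - x\<bar> \<longleftrightarrow> 0 < k \<and> SA_volume k \<bar>x\<bar>" for k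
    using SA_volume_reflect[OF _ assms] SA_volume_reflect[of k a "a - x"] assms by auto
  then show ?thesis
    using assms(2,3) unfolding period_deg_SA_volume by simp
qed

theorem mainTheorem8:
  fixes p1 p2 :: real
  assumes "p1 \<in> PKZ" and "p2 \<in> PKZ"
    and "\<not> algebraic p1" and "\<not> algebraic p2"
    and "period_deg p1 \<noteq> period_deg p2"
  shows "\<not> algebraic (p1 + p2)"
proof
  assume "algebraic (p1 + p2)"
  moreover have "p1 \<noteq> 0" "p2 \<noteq> 0"
    using assms(3,4) by auto
  ultimately have "period_deg p2 = period_deg p1"
    using period_deg_algebraic_minus[of "p1 + p2" p1] by simp
  with assms(5) show False by simp
qed

end
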